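(* Let $G$ be an orderable group and let $U\subseteq G$ be a finite set of pairwise commensurable elements. Then $\langle U\rangle$ is a cyclic subgroup of $G$.
   Context: A group is orderable if it has a linear order $\le$ such that $g\le h$ implies $xgy\le xhy$ for all $g,h,x,y$. Two elements $g,h$ are commensurable if $g^x=h^y$ for some $x,y\in\mathbb{Z}\setminus\{0\}$. *)

theory Defs
  imports "HOL-Algebra.Algebra"
begin

definition orderable :: "('a, 'b) monoid_scheme \<Rightarrow> bool" where
  "orderable G \<longleftrightarrow> (\<exists>r. linear_order_on (carrier G) r \<and>
     (\<forall>g\<in>carrier G. \<forall>h\<in>carrier G. \<forall>x\<in>carrier G. \<forall>y\<in>carrier G.
        (g, h) \<in> r \<longrightarrow> (x \<otimes>\<^bsub>G\<^esub> g \<otimes>\<^bsub>G\<^esub> y, x \<otimes>\<^bsub>G\<^esub> h \<otimes>\<^bsub>G\<^esub> y) \<in> r))"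

definition commensurable :: "('a, 'b) monoid_scheme \<Rightarrow> 'a \<Rightarrow> 'a \<Rightarrow> bool" where
  "commensurable G g h \<longleftrightarrow>
     (\<exists>x y :: int. x \<noteq> 0 \<and> y \<noteq> 0 \<and> g [^]\<^bsub>G\<^esub> (x::int) = h [^]\<^bsub>G\<^esub> (y::int))"

end

theory Submission
  imports Defs
begin

text \<open>In a bi-ordered group, \<open>g < h\<close> implies \<open>g\<^sup>n < h\<^sup>n\<close> for \<open>n > 0\<close>, so nonzero powers
determine their roots. Conjugating by \<open>b\<close>, this turns "\<open>a\<^sup>n\<close> commutes with \<open>b\<close>" into
"\<open>a\<close> commutes with \<open>b\<close>". Now induct on \<open>U\<close>: if \<open>\<langle>F\<rangle> = \<langle>c\<rangle>\<close> and \<open>g\<close> is commensurable with an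
element of \<open>F\<close>, then \<open>c\<^sup>m = g\<^sup>n\<close> with \<open>n \<noteq> 0\<close>, hence \<open>c\<close> and \<open>g\<close> commute. Taking \<open>d\<close>-th roots
for \<open>d = gcd m n\<close> makes \<open>m\<close>, \<open>n\<close> coprime, and with \<open>s m + t n = 1\<close> the element \<open>c\<^sup>t g\<^sup>s\<close>
generates both \<open>c\<close> and \<open>g\<close>.\<close>

lemma (in group) conj_int_pow:
  assumes "a \<in> carrier G" and "b \<in> carrier G"
  shows "inv b \<otimes> a [^] (i::int) \<otimes> b = (inv b \<otimes> a \<otimes> b) [^] i"
proof -
  have "(\<lambda>x. inv b \<otimes> x \<otimes> b) \<in> hom G G"
    using assms(2) by (auto simp: hom_def m_assoc simp flip: m_assoc[of b "inv b"])
  then show ?thesis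
    using hom_int_pow[of _ G G a i] assms is_group by blast
qed

lemma (in group) commute_iff_conj_eq:
  assumes "a \<in> carrier G" and "b \<in> carrier G"
  shows "a \<otimes> b = b \<otimes> a \<longleftrightarrow> inv b \<otimes> a \<otimes> b = a"
  using assms by (simp add: m_assoc inv_solve_left' eq_commute[of "a \<otimes> b"])

lemma (in group) int_pow_commute:
  assumes "a \<in> carrier G" and "b \<in> carrier G" and "a \<otimes> b = b \<otimes> a"
  shows "a [^] (i::int) \<otimes> b = b \<otimes> a [^] i"
  using assms by (simp add: commute_iff_conj_eq conj_int_pow)

lemma (in group) generate_insert_mono:
  assumes "generate G A \<subseteq> generate G B" and "insert g B \<subseteq> carrier G"
  shows "generate G (insert g A) \<subseteq> generate G (insert g B)"
proof (rule generate_subgroup_incl)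
  show "subgroup (generate G (insert g B)) G"
    using assms(2) by (rule generate_is_subgroup)
  have "generate G B \<subseteq> generate G (insert g B)"
    by (rule mono_generate) blast
  then show "insert g A \<subseteq> generate G (insert g B)"
    using assms(1) generate.incl[of _ A G] generate.incl[of g "insert g B" G] by blast
qed

lemma (in group) commuting_coprime_powers_generate_cyclic:
  assumes c: "c \<in> carrier G" and g: "g \<in> carrier G" and comm: "c \<otimes> g = g \<otimes> c"
    and "coprime m n" and pow_eq: "c [^] (m::int) = g [^] (n::int)"
  obtains e where "e \<in> carrier G" and "generate G {c, g} = generate G {e}"
proof -
  obtain s t where bezout: "s * m + t * n = 1"
    using bezout_int[of m n] \<open>coprime m n\<close> by (auto simp: coprime_iff_gcd_eq_1)
  define e where "e = c [^] t \<otimes> g [^] s"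
  have e: "e \<in> carrier G"
    using c g by (simp add: e_def)
  have "c [^] t \<otimes> g = g \<otimes> c [^] t"
    using c g comm by (rule int_pow_commute)
  then have "g [^] s \<otimes> c [^] t = c [^] t \<otimes> g [^] s"
    using c g by (intro int_pow_commute) auto
  then have e_pow: "e [^] k = c [^] (t * k) \<otimes> g [^] (s * k)" for k :: int
    using c g by (simp add: e_def int_pow_mult_distrib int_pow_pow)
  have "e [^] n = c [^] (t * n) \<otimes> (g [^] n) [^] s"
    using g by (simp add: e_pow int_pow_pow mult.commute)
  also have "\<dots> = c [^] (t * n + m * s)"
    using c by (simp add: pow_eq[symmetric] int_pow_pow int_pow_mult)
  finally have c_eq: "c = e [^] n"
    using c bezout by (simp add: algebra_simps)
  have "e [^] m = (c [^] m) [^] t \<otimes> g [^] (s * m)"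
    using c by (simp add: e_pow int_pow_pow mult.commute)
  also have "\<dots> = g [^] (n * t + s * m)"
    using g by (simp add: pow_eq int_pow_pow int_pow_mult)
  finally have g_eq: "g = e [^] m"
    using g bezout by (simp add: algebra_simps)
  have "generate G {c, g} \<subseteq> generate G {e}"
    using c_eq g_eq generate_pow[OF e] e
    by (intro generate_subgroup_incl generate_is_subgroup) auto
  moreover have "generate G {e} \<subseteq> generate G {c, g}"
  proof (rule generate_subgroup_incl)
    show sub: "subgroup (generate G {c, g}) G"
      using c g by (intro generate_is_subgroup) auto
    have "c [^] t \<in> generate G {c, g}" and "g [^] s \<in> generate G {c, g}"
      by (auto intro: subgroup_int_pow_closed[OF sub] generate.incl)
    then show "{e} \<subseteq> generate G {c, g}"
      using subgroup.m_closed[OF sub] by (simp add: e_def)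
  qed
  ultimately show ?thesis
    using that e by blast
qed

text \<open>Groups with unique roots are the R-groups of the literature; the argument below needs
nothing else from the order.\<close>

locale unique_roots_group = group +
  assumes nat_pow_eq_imp_eq:
    "\<lbrakk>g \<in> carrier G; h \<in> carrier G; 0 < n; g [^] (n::nat) = h [^] n\<rbrakk> \<Longrightarrow> g = h"
begin

lemma int_pow_eq_imp_eq:
  assumes g: "g \<in> carrier G" and h: "h \<in> carrier G" and "n \<noteq> 0"
    and pow_eq: "g [^] (n::int) = h [^] n"
  shows "g = h"
proof -
  have "g [^] \<bar>n\<bar> = h [^] \<bar>n\<bar>"
    using pow_eq g h by (cases "n < 0") (simp_all add: int_pow_neg)
  then have "g [^] nat \<bar>n\<bar> = h [^] nat \<bar>n\<bar>"
    by (simp add: pow_nat)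
  then show ?thesis
    using nat_pow_eq_imp_eq[OF g h] \<open>n \<noteq> 0\<close> by (metis zero_less_abs_iff zero_less_nat_eq)
qed

lemma commute_if_pow_commute:
  assumes a: "a \<in> carrier G" and b: "b \<in> carrier G" and "n \<noteq> 0"
    and "a [^] (n::int) \<otimes> b = b \<otimes> a [^] n"
  shows "a \<otimes> b = b \<otimes> a"
proof -
  have "inv b \<otimes> a [^] n \<otimes> b = a [^] n"
    using assms commute_iff_conj_eq[of "a [^] n" b] by simp
  then have conj_pow: "(inv b \<otimes> a \<otimes> b) [^] n = a [^] n"
    using a b by (simp add: conj_int_pow)
  have "inv b \<otimes> a \<otimes> b = a"
    using int_pow_eq_imp_eq[OF _ a \<open>n \<noteq> 0\<close> conj_pow] a b by simp
  then show ?thesis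
    using a b by (simp add: commute_iff_conj_eq)
qed

lemma commuting_powers_eq_generate_cyclic:
  assumes c: "c \<in> carrier G" and g: "g \<in> carrier G" and comm: "c \<otimes> g = g \<otimes> c"
    and "n \<noteq> 0" and pow_eq: "c [^] (m::int) = g [^] (n::int)"
  obtains e where "e \<in> carrier G" and "generate G {c, g} = generate G {e}"
proof -
  define d where "d = gcd m n"
  have "d \<noteq> 0"
    using \<open>n \<noteq> 0\<close> by (simp add: d_def)
  have "m div d * d = m" and "n div d * d = n"
    by (simp_all add: d_def)
  then have "(c [^] (m div d)) [^] d = (g [^] (n div d)) [^] d"
    using c g pow_eq by (simp only: int_pow_pow)
  then have "c [^] (m div d) = g [^] (n div d)"
    using int_pow_eq_imp_eq[OF _ _ \<open>d \<noteq> 0\<close>] c g by simp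
  moreover have "coprime (m div d) (n div d)"
    using \<open>n \<noteq> 0\<close> by (simp add: d_def div_gcd_coprime)
  ultimately show ?thesis
    using commuting_coprime_powers_generate_cyclic[OF c g comm] that by blast
qed

lemma generate_cyclic_if_pairwise_commensurable:
  assumes "finite U" and "U \<subseteq> carrier G" and "\<forall>g\<in>U. \<forall>h\<in>U. commensurable G g h"
  shows "\<exists>c\<in>carrier G. generate G U = generate G {c}"
  using assms
proof (induction U rule: finite_induct)
  case empty
  show ?case
    using generate_empty generate_one by blast
next
  case (insert g F)
  then have g: "g \<in> carrier G" by simp
  show ?case
  proof (cases "F = {}")
    case True
    then show ?thesis
      using g by blast
  next
    case False
    then obtain u where "u \<in> F" by blast
    from insert obtain c where c: "c \<in> carrier G" and F_eq: "generate G F = generate G {c}"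
      by auto
    have "u \<in> generate G {c}"
      using \<open>u \<in> F\<close> F_eq generate.incl[of u F G] by simp
    then obtain k where u: "u = c [^] (k::int)"
      using generate_pow[OF c] by blast
    have "commensurable G u g"
      using insert.prems \<open>u \<in> F\<close> by blast
    then obtain x y :: int where "y \<noteq> 0" and "u [^] x = g [^] y"
      unfolding commensurable_def by blast
    then have pow_eq: "c [^] (k * x) = g [^] y"
      using c by (simp add: u int_pow_pow)
    have "g [^] y \<otimes> c = c \<otimes> g [^] y"
      using int_pow_commute[OF c c refl] by (simp add: pow_eq[symmetric])
    then have "c \<otimes> g = g \<otimes> c"
      using commute_if_pow_commute[OF g c \<open>y \<noteq> 0\<close>] by simp
    then obtain e where e: "e \<in> carrier G" and "generate G {c, g} = generate G {e}"
      using commuting_powers_eq_generate_cyclic[OF c g _ \<open>y \<noteq> 0\<close> pow_eq] by blast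
    moreover have "generate G (insert g F) = generate G {c, g}"
      using generate_insert_mono[of F "{c}" g] generate_insert_mono[of "{c}" F g]
        F_eq c g insert.prems by (auto simp: insert_commute)
    ultimately show ?thesis
      by blast
  qed
qed

end

locale biordered_group = group G for G (structure) +
  fixes r :: "'a rel"
  assumes linear_order: "linear_order_on (carrier G) r"
    and mult_mono: "\<lbrakk>(g, h) \<in> r; g \<in> carrier G; h \<in> carrier G; x \<in> carrier G; y \<in> carrier G\<rbrakk>
      \<Longrightarrow> (x \<otimes> g \<otimes> y, x \<otimes> h \<otimes> y) \<in> r"

lemma orderable_imp_biordered_group:
  assumes "group G" and "orderable G"
  obtains r where "biordered_group G r"
  using assms unfolding orderable_def biordered_group_def biordered_group_axioms_def by blast

context biordered_group
begin

lemma refl_r: "g \<in> carrier G \<Longrightarrow> (g, g) \<in> r"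
  using linear_order
  unfolding linear_order_on_def partial_order_on_def preorder_on_def refl_on_def by blast

lemma trans_r: "(f, g) \<in> r \<Longrightarrow> (g, h) \<in> r \<Longrightarrow> (f, h) \<in> r"
  using linear_order
  unfolding linear_order_on_def partial_order_on_def preorder_on_def trans_def by blast

lemma antisym_r: "(g, h) \<in> r \<Longrightarrow> (h, g) \<in> r \<Longrightarrow> g = h"
  using linear_order unfolding linear_order_on_def partial_order_on_def antisym_def by blast

lemma total_r: "\<lbrakk>g \<in> carrier G; h \<in> carrier G; g \<noteq> h\<rbrakk> \<Longrightarrow> (g, h) \<in> r \<or> (h, g) \<in> r"
  using linear_order unfolding linear_order_on_def total_on_def by blast

lemma mult_left_mono: "\<lbrakk>(g, h) \<in> r; g \<in> carrier G; h \<in> carrier G; x \<in> carrier G\<rbrakk> \<Longrightarrow> (x \<otimes> g, x \<otimes> h) \<in> r"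
  using mult_mono[of g h x \<one>] by simp

lemma mult_right_mono: "\<lbrakk>(g, h) \<in> r; g \<in> carrier G; h \<in> carrier G; y \<in> carrier G\<rbrakk> \<Longrightarrow> (g \<otimes> y, h \<otimes> y) \<in> r"
  using mult_mono[of g h \<one> y] by simp

lemma nat_pow_mono:
  assumes "(g, h) \<in> r" and g: "g \<in> carrier G" and h: "h \<in> carrier G"
  shows "(g [^] (n::nat), h [^] n) \<in> r"
proof (induction n)
  case 0
  show ?case by (simp add: refl_r)
next
  case (Suc n)
  have "(g [^] n \<otimes> g, g [^] n \<otimes> h) \<in> r"
    using assms by (simp add: mult_left_mono)
  moreover have "(g [^] n \<otimes> h, h [^] n \<otimes> h) \<in> r"
    using Suc g h by (simp add: mult_right_mono)
  ultimately show ?case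
    by (simp add: trans_r)
qed

lemma nat_pow_strict_mono:
  assumes "(g, h) \<in> r" and "g \<noteq> h" and g: "g \<in> carrier G" and h: "h \<in> carrier G" and "0 < n"
  shows "g [^] (n::nat) \<noteq> h [^] n"
proof
  assume pow_eq: "g [^] n = h [^] n"
  obtain m where n: "n = Suc m"
    using \<open>0 < n\<close> gr0_implies_Suc by blast
  have left_step: "(g [^] m \<otimes> g, g [^] m \<otimes> h) \<in> r"
    using assms by (simp add: mult_left_mono)
  have "(g [^] m \<otimes> h, h [^] m \<otimes> h) \<in> r"
    using assms by (simp add: mult_right_mono nat_pow_mono)
  then have "(g [^] m \<otimes> h, g [^] m \<otimes> g) \<in> r"
    using pow_eq by (simp add: n)
  with left_step have "g [^] m \<otimes> g = g [^] m \<otimes> h"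
    by (rule antisym_r)
  then show False
    using \<open>g \<noteq> h\<close> g h by simp
qed

end

sublocale biordered_group \<subseteq> unique_roots_group
proof
  fix g h and n :: nat
  assume "g \<in> carrier G" "h \<in> carrier G" "0 < n" "g [^] n = h [^] n"
  then show "g = h"
    using total_r nat_pow_strict_mono by metis
qed

theorem mainTheorem17:
  fixes G (structure) and U :: "'a set"
  assumes "group G" and "orderable G"
    and "U \<subseteq> carrier G" and "finite U"
    and "\<forall>g\<in>U. \<forall>h\<in>U. commensurable G g h"
  shows "\<exists>c\<in>carrier G. generate G U = generate G {c}"
proof -
  obtain r where "biordered_group G r"
    using orderable_imp_biordered_group assms(1,2) by blast
  then interpret biordered_group G r .
  show ?thesis
    using generate_cyclic_if_pairwise_commensurable assms(3-5) by blast
qed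

end
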